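(* Let $R$ be a commutative ring, $S$ a subring of $R$, $I$ an ideal of $S$, $n\ge1$ and $f\in(T_n(R))[x]$. [Right] Let $1\le i\le n$. The following are equivalent: (1) for every $C\in T_n(S)$ all entries of the $i$-th row of $f(C)$ lie in $I$; (2) for all $C\in T_n(S)$ and all $h,j$ with $i\le h\le j\le n$, $[f_{ih}(C)]_{hj}\in I$; (3) for all $h,j$ with $i\le h\le j\le n$, $\langle f_{ih},p_{hj}\rangle\in\mathrm{Int}(S^{\ast},I)$; (4) $f_{ih}\in\mathrm{Int}_R(T_{n-h+1}(S),T_{n-h+1}(I))$ for $h=i,\dots,n$. [Left] Let $1\le j\le n$. The following are equivalent: (1) for every $C\in T_n(S)$ all entries of the $j$-th column of $f(C)_\ell$ lie in $I$; (2) for all $C\in T_n(S)$ and all $i,h$ with $1\le i\le h\le j$, $[f_{hj}(C)]_{ih}\in I$; (3) for all $i,h$ with $1\le i\le h\le j$, $\langle f_{hj},p_{ih}\rangle\in\mathrm{Int}(S^{\ast},I)$; (4) $f_{hj}\in\mathrm{Int}_R(T_h(S),T_h(I))$ for $h=1,\dots,j$.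
   Context: $\mathbb{N}=\{1,2,3,\dots\}$. $T_n(A)$ denotes the ring of upper triangular $n\times n$ matrices over a ring $A$, and $[M]_{ij}$ the $(i,j)$-entry of a matrix $M$. For $f=\sum_k F_kx^k\in(T_n(R))[x]$ with $F_k\in T_n(R)$, right substitution is $f(C)=\sum_kF_kC^k$ and left substitution is $f(C)_\ell=\sum_kC^kF_k$. Writing $f_{ij}^{(k)}=[F_k]_{ij}$, set $f_{ij}=\sum_k f_{ij}^{(k)}x^k\in R[x]$. For $g\in R[x]$, $g(C)$ is the usual evaluation at a matrix, and $\mathrm{Int}_R(T_m(S),T_m(I))=\{g\in R[x]\mid \forall C\in T_m(S):\ g(C)\in T_m(I)\}$. Let $R[X]=R[\{x_{ab}\mid a,b\in\mathbb{N}\}]$. Path polynomials: for $1\le i\le j$ and $k>0$, $p_{ij}^{(k)}=\sum_{i=i_1\le i_2\le\dots\le i_{k+1}=j} x_{i_1i_2}\cdots x_{i_ki_{k+1}}$; for $1\le i\le j$, $p_{ij}^{(0)}=\delta_{ij}$; for $i>j$, $p_{ij}^{(k)}=0$. For $g=\sum_kg_kx^k\in R[x]$, $\langle g,p_{ij}\rangle=\sum_k g_kp_{ij}^{(k)}\in R[X]$. $\mathrm{Int}(S^{\ast},I)$ denotes the set of polynomials in $R[X]$ that take values in $I$ whenever elements of $S$ are substituted (independently) for all the variables. *)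

theory Defs
  imports "HOL-Computational_Algebra.Polynomial"
begin

text \<open>Matrices of size n are functions nat => nat => 'a, indices 1..n, entries
  outside the range {1..n} x {1..n} are 0 by convention.\<close>

definition mat_one :: "nat \<Rightarrow> nat \<Rightarrow> nat \<Rightarrow> 'a::comm_ring_1" where
  "mat_one n i j = (if i = j \<and> 1 \<le> i \<and> i \<le> n then 1 else 0)"

definition mat_mult :: "nat \<Rightarrow> (nat \<Rightarrow> nat \<Rightarrow> 'a::comm_ring_1) \<Rightarrow> (nat \<Rightarrow> nat \<Rightarrow> 'a) \<Rightarrow> nat \<Rightarrow> nat \<Rightarrow> 'a" where
  "mat_mult n A B i j = (\<Sum>k\<in>{1..n}. A i k * B k j)"

primrec mat_pow :: "nat \<Rightarrow> (nat \<Rightarrow> nat \<Rightarrow> 'a::comm_ring_1) \<Rightarrow> nat \<Rightarrow> nat \<Rightarrow> nat \<Rightarrow> 'a" where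
  "mat_pow n C 0 = mat_one n"
| "mat_pow n C (Suc k) = mat_mult n (mat_pow n C k) C"

definition in_T :: "nat \<Rightarrow> 'a::comm_ring_1 set \<Rightarrow> (nat \<Rightarrow> nat \<Rightarrow> 'a) \<Rightarrow> bool" where
  "in_T n A C \<longleftrightarrow> (\<forall>i j. (1 \<le> i \<and> i \<le> j \<and> j \<le> n \<longrightarrow> C i j \<in> A) \<and>
                        (\<not> (1 \<le> i \<and> i \<le> j \<and> j \<le> n) \<longrightarrow> C i j = 0))"

definition poly_mat :: "nat \<Rightarrow> 'a::comm_ring_1 poly \<Rightarrow> (nat \<Rightarrow> nat \<Rightarrow> 'a) \<Rightarrow> nat \<Rightarrow> nat \<Rightarrow> 'a" where
  "poly_mat m g C a b = (\<Sum>k\<le>degree g. coeff g k * mat_pow m C k a b)"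

text \<open>A polynomial f = sum_k F_k x^k in (T_n(R))[x] is given by its entry polynomials
  f i j = sum_k [F_k]_ij x^k.  It lies in (T_n(R))[x] iff f i j = 0 unless 1 <= i <= j <= n.\<close>
definition is_Tpoly :: "nat \<Rightarrow> (nat \<Rightarrow> nat \<Rightarrow> 'a::comm_ring_1 poly) \<Rightarrow> bool" where
  "is_Tpoly n f \<longleftrightarrow> (\<forall>i j. \<not> (1 \<le> i \<and> i \<le> j \<and> j \<le> n) \<longrightarrow> f i j = 0)"

definition deg_bound :: "nat \<Rightarrow> (nat \<Rightarrow> nat \<Rightarrow> 'a::comm_ring_1 poly) \<Rightarrow> nat" where
  "deg_bound n f = (\<Sum>a\<in>{1..n}. \<Sum>b\<in>{1..n}. degree (f a b))"

text \<open>Right substitution f(C) = sum_k F_k C^k.\<close>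
definition right_eval :: "nat \<Rightarrow> (nat \<Rightarrow> nat \<Rightarrow> 'a::comm_ring_1 poly) \<Rightarrow> (nat \<Rightarrow> nat \<Rightarrow> 'a) \<Rightarrow> nat \<Rightarrow> nat \<Rightarrow> 'a" where
  "right_eval n f C i j = (\<Sum>k\<le>deg_bound n f. \<Sum>h\<in>{1..n}. coeff (f i h) k * mat_pow n C k h j)"

text \<open>Left substitution f(C)_l = sum_k C^k F_k.\<close>
definition left_eval :: "nat \<Rightarrow> (nat \<Rightarrow> nat \<Rightarrow> 'a::comm_ring_1 poly) \<Rightarrow> (nat \<Rightarrow> nat \<Rightarrow> 'a) \<Rightarrow> nat \<Rightarrow> nat \<Rightarrow> 'a" where
  "left_eval n f C i j = (\<Sum>k\<le>deg_bound n f. \<Sum>h\<in>{1..n}. mat_pow n C k i h * coeff (f h j) k)"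

definition Int_T :: "nat \<Rightarrow> 'a::comm_ring_1 set \<Rightarrow> 'a set \<Rightarrow> 'a poly set" where
  "Int_T m S I = {g. \<forall>C. in_T m S C \<longrightarrow> in_T m I (poly_mat m g C)}"

text \<open>Value of the path polynomial p_ij^(k) under the assignment x_ab := sigma (a,b):
  sum over i = i_1 <= i_2 <= ... <= i_(k+1) = j of the products.\<close>
fun path_val :: "(nat \<times> nat \<Rightarrow> 'a::comm_ring_1) \<Rightarrow> nat \<Rightarrow> nat \<Rightarrow> nat \<Rightarrow> 'a" where
  "path_val \<sigma> i j 0 = (if i = j then 1 else 0)"
| "path_val \<sigma> i j (Suc k) = (\<Sum>l\<in>{i..j}. \<sigma> (i, l) * path_val \<sigma> l j k)"

text \<open>The polynomial <g, p_ij> in R[X], represented by its evaluation function.\<close>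
definition pair_path :: "'a::comm_ring_1 poly \<Rightarrow> nat \<Rightarrow> nat \<Rightarrow> (nat \<times> nat \<Rightarrow> 'a) \<Rightarrow> 'a" where
  "pair_path g i j \<sigma> = (\<Sum>k\<le>degree g. coeff g k * path_val \<sigma> i j k)"

definition Int_star :: "'a set \<Rightarrow> 'a set \<Rightarrow> ((nat \<times> nat \<Rightarrow> 'a) \<Rightarrow> 'a) \<Rightarrow> bool" where
  "Int_star S I P \<longleftrightarrow> (\<forall>\<sigma>. (\<forall>a b. \<sigma> (a, b) \<in> S) \<longrightarrow> P \<sigma> \<in> I)"

definition is_subring :: "'a::comm_ring_1 set \<Rightarrow> bool" where
  "is_subring S \<longleftrightarrow> 0 \<in> S \<and> 1 \<in> S \<and> (\<forall>a\<in>S. \<forall>b\<in>S. a + b \<in> S \<and> a - b \<in> S \<and> a * b \<in> S)"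

definition is_ideal_of :: "'a::comm_ring_1 set \<Rightarrow> 'a set \<Rightarrow> bool" where
  "is_ideal_of I S \<longleftrightarrow> I \<subseteq> S \<and> 0 \<in> I \<and> (\<forall>a\<in>I. \<forall>b\<in>I. a + b \<in> I \<and> a - b \<in> I)
      \<and> (\<forall>s\<in>S. \<forall>a\<in>I. s * a \<in> I)"

end

theory Submission
  imports Defs
begin

text \<open>Powers of an upper triangular matrix C are sums over monotone index paths, so the (a,b)
  entry of g(C) is the path polynomial \<open>\<langle>g, p_ab\<rangle>\<close> evaluated at the entries of C, and since
  0 \<in> S every assignment of elements of S to the variables arises from some C \<in> T_n(S). Relabelling
  the variables shows that membership of \<open>\<langle>g, p_ab\<rangle>\<close> in Int(S*, I) depends only on b - a, which
  turns the entrywise conditions into membership in \<open>Int_R(T_m(S), T_m(I))\<close>. Finally, the (i,j)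
  entry of f(C) is \<open>\<Sum>\<^sub>h [f_ih(C)]_hj\<close>: deleting the rows of C above row h isolates the tail sums
  of this expansion (for left substitution, deleting the columns after column h isolates its
  initial sums), and consecutive differences isolate each single term.\<close>

lemma path_val_cong:
  assumes "\<And>x y. a \<le> x \<Longrightarrow> x \<le> y \<Longrightarrow> y \<le> b \<Longrightarrow> \<sigma> (x, y) = \<tau> (x, y)"
  shows "path_val \<sigma> a b k = path_val \<tau> a b k"
  using assms
proof (induction k arbitrary: a)
  case (Suc k)
  show ?case
    unfolding path_val.simps using Suc.prems by (intro sum.cong refl arg_cong2[where f = "(*)"] Suc.IH) auto
qed simp

lemma pair_path_cong:
  "(\<And>x y. a \<le> x \<Longrightarrow> x \<le> y \<Longrightarrow> y \<le> b \<Longrightarrow> \<sigma> (x, y) = \<tau> (x, y)) \<Longrightarrow> pair_path g a b \<sigma> = pair_path g a b \<tau>"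
  unfolding pair_path_def by (intro sum.cong refl arg_cong2[where f = "(*)"] path_val_cong)

lemma path_val_eq_0: "b < a \<Longrightarrow> path_val \<sigma> a b k = 0"
  by (cases k) auto

lemma path_val_shift: "path_val (\<lambda>(x, y). \<sigma> (x + c, y + c)) a b k = path_val \<sigma> (a + c) (b + c) k"
proof (induction k arbitrary: a)
  case (Suc k)
  have "path_val \<sigma> (a + c) (b + c) (Suc k) = (\<Sum>l\<in>{a..b}. \<sigma> (a + c, l + c) * path_val \<sigma> (l + c) (b + c) k)"
    by (simp add: sum.shift_bounds_cl_nat_ivl)
  with Suc.IH show ?case by simp
qed simp

lemma Int_star_pair_path_shift:
  "Int_star S I (pair_path g (a + c) (b + c)) \<longleftrightarrow> Int_star S I (pair_path g a b)"
proof -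
  have shift: "pair_path g a b (\<lambda>(x, y). \<sigma> (x + c, y + c)) = pair_path g (a + c) (b + c) \<sigma>" for \<sigma>
    unfolding pair_path_def by (simp only: path_val_shift)
  show ?thesis
  proof
    assume H: "Int_star S I (pair_path g (a + c) (b + c))"
    show "Int_star S I (pair_path g a b)"
      unfolding Int_star_def
    proof (intro allI impI)
      fix \<sigma> :: "nat \<times> nat \<Rightarrow> 'a" assume "\<forall>x y. \<sigma> (x, y) \<in> S"
      then have "pair_path g (a + c) (b + c) (\<lambda>(x, y). \<sigma> (x - c, y - c)) \<in> I"
        using H unfolding Int_star_def by auto
      then show "pair_path g a b \<sigma> \<in> I"
        by (simp flip: shift)
    qed
  qed (auto simp: Int_star_def simp flip: shift)
qed

lemma Int_star_pair_path_translate: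
  assumes "a \<le> b" "a' \<le> b'" "b - a = b' - a'"
  shows "Int_star S I (pair_path g a b) \<longleftrightarrow> Int_star S I (pair_path g a' b')"
proof -
  have "Int_star S I (pair_path g a b) \<longleftrightarrow> Int_star S I (pair_path g (0 + a) ((b - a) + a))"
    using assms(1) by simp
  also have "\<dots> \<longleftrightarrow> Int_star S I (pair_path g (0 + a') ((b' - a') + a'))"
    unfolding Int_star_pair_path_shift assms(3) ..
  finally show ?thesis
    using assms(2) by simp
qed

lemma mat_mult_assoc: "mat_mult n (mat_mult n A B) D = mat_mult n A (mat_mult n B D)"
  unfolding mat_mult_def
  by (intro ext) (simp add: sum_distrib_left sum_distrib_right mult.assoc, rule sum.swap)

lemma mat_mult_one_left: "mat_mult n (mat_one n) C a b = (if a \<in> {1..n} then C a b else 0)"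
proof -
  have "mat_one n a k * C k b = (if k = a then (if a \<in> {1..n} then C a b else 0) else 0)" for k
    by (auto simp: mat_one_def)
  then show ?thesis
    unfolding mat_mult_def by (simp add: sum.delta')
qed

lemma mat_mult_one_right: "mat_mult n C (mat_one n) a b = (if b \<in> {1..n} then C a b else 0)"
proof -
  have "C a k * mat_one n k b = (if k = b then (if b \<in> {1..n} then C a b else 0) else 0)" for k
    by (auto simp: mat_one_def)
  then show ?thesis
    unfolding mat_mult_def by (simp add: sum.delta')
qed

lemma mat_pow_Suc_left:
  assumes "\<forall>a b. C a b \<noteq> 0 \<longrightarrow> a \<in> {1..n} \<and> b \<in> {1..n}"
  shows "mat_pow n C (Suc k) = mat_mult n C (mat_pow n C k)"
proof (induction k)
  case 0
  show ?case
    using assms by (fastforce intro!: ext simp: mat_mult_one_left mat_mult_one_right)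
next
  case (Suc k)
  then show ?case
    by (simp add: mat_mult_assoc)
qed

lemma in_T_eq_0: "in_T n A C \<Longrightarrow> \<not> (1 \<le> a \<and> a \<le> b \<and> b \<le> n) \<Longrightarrow> C a b = 0"
  unfolding in_T_def by blast

lemma mat_pow_eq_path_val:
  assumes C: "in_T n A C" and "1 \<le> a" "b \<le> n"
  shows "mat_pow n C k a b = path_val (\<lambda>(x, y). C x y) a b k"
  using assms(2)
proof (induction k arbitrary: a)
  case 0
  then show ?case
    using assms(3) by (simp add: mat_one_def)
next
  case (Suc k)
  have supp: "\<forall>x y. C x y \<noteq> 0 \<longrightarrow> x \<in> {1..n} \<and> y \<in> {1..n}"
    using in_T_eq_0[OF C] by (meson atLeastAtMost_iff order_trans)
  have "mat_pow n C (Suc k) a b = (\<Sum>l\<in>{1..n}. C a l * mat_pow n C k l b)"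
    by (simp only: mat_pow_Suc_left[OF supp] mat_mult_def)
  also have "\<dots> = (\<Sum>l\<in>{1..n}. C a l * path_val (\<lambda>(x, y). C x y) l b k)"
    using Suc.IH by (intro sum.cong) auto
  also have "\<dots> = (\<Sum>l\<in>{a..b}. C a l * path_val (\<lambda>(x, y). C x y) l b k)"
    using Suc.prems assms(3) in_T_eq_0[OF C, of a]
    by (intro sum.mono_neutral_right) (auto simp: not_le path_val_eq_0)
  finally show ?case
    by simp
qed

lemma mat_pow_eq_0:
  assumes C: "in_T n A C" and "\<not> (1 \<le> a \<and> a \<le> b \<and> b \<le> n)"
  shows "mat_pow n C k a b = 0"
  using assms(2)
proof (induction k arbitrary: b)
  case (Suc k)
  have "mat_pow n C k a l * C l b = 0" for l
    using Suc in_T_eq_0[OF C, of l b] by (cases "1 \<le> a \<and> a \<le> l \<and> l \<le> n") auto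
  then show ?case
    by (simp add: mat_mult_def)
qed (auto simp: mat_one_def)

lemma poly_mat_eq_pair_path:
  "in_T n A C \<Longrightarrow> 1 \<le> a \<Longrightarrow> b \<le> n \<Longrightarrow> poly_mat n g C a b = pair_path g a b (\<lambda>(x, y). C x y)"
  unfolding poly_mat_def pair_path_def by (simp add: mat_pow_eq_path_val)

lemma poly_mat_eq_0: "in_T n A C \<Longrightarrow> \<not> (1 \<le> a \<and> a \<le> b \<and> b \<le> n) \<Longrightarrow> poly_mat n g C a b = 0"
  unfolding poly_mat_def by (simp add: mat_pow_eq_0)

lemma poly_mat_0 [simp]: "poly_mat n 0 C a b = 0"
  unfolding poly_mat_def by simp

lemma poly_mat_eq_sum_atMost:
  "degree g \<le> d \<Longrightarrow> poly_mat n g C a b = (\<Sum>k\<le>d. coeff g k * mat_pow n C k a b)"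
  unfolding poly_mat_def by (rule sum.mono_neutral_left) (auto simp: coeff_eq_0)

lemma ideal_zero_mem: "is_ideal_of I S \<Longrightarrow> 0 \<in> I"
  unfolding is_ideal_of_def by blast

lemma ideal_diff_mem: "is_ideal_of I S \<Longrightarrow> a \<in> I \<Longrightarrow> b \<in> I \<Longrightarrow> a - b \<in> I"
  unfolding is_ideal_of_def by blast

lemma ideal_sum_mem:
  assumes I: "is_ideal_of I S" and "\<And>x. x \<in> A \<Longrightarrow> g x \<in> I"
  shows "sum g A \<in> I"
proof (cases "finite A")
  case True
  then show ?thesis
    using assms(2) by induction (use I in \<open>auto simp: is_ideal_of_def\<close>)
qed (simp add: ideal_zero_mem[OF I])

lemma ideal_mem_of_tail_sums:
  fixes h j :: nat
  assumes I: "is_ideal_of I S" and "h \<le> j" and tails: "\<And>h'. h \<le> h' \<Longrightarrow> h' \<le> j \<Longrightarrow> (\<Sum>l\<in>{h'..j}. t l) \<in> I"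
  shows "t h \<in> I"
proof -
  have "(\<Sum>l\<in>{Suc h..j}. t l) \<in> I"
    using tails ideal_zero_mem[OF I] by (cases "Suc h \<le> j") auto
  moreover have "(\<Sum>l\<in>{h..j}. t l) = t h + (\<Sum>l\<in>{Suc h..j}. t l)"
    using \<open>h \<le> j\<close> by (rule sum.atLeast_Suc_atMost)
  ultimately show ?thesis
    using ideal_diff_mem[OF I] tails[of h] \<open>h \<le> j\<close> by (metis add_diff_cancel_right' order_refl)
qed

lemma ideal_mem_of_head_sums:
  fixes i h :: nat
  assumes I: "is_ideal_of I S" and "i \<le> h" and heads: "\<And>h'. i \<le> h' \<Longrightarrow> h' \<le> h \<Longrightarrow> (\<Sum>l\<in>{i..h'}. t l) \<in> I"
  shows "t h \<in> I"
proof (cases "h = i")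
  case True
  then show ?thesis
    using heads[of h] by simp
next
  case False
  then obtain h' where h': "h = Suc h'" "i \<le> h'"
    using \<open>i \<le> h\<close> by (cases h) auto
  have "(\<Sum>l\<in>{i..h}. t l) = (\<Sum>l\<in>{i..h'}. t l) + t h"
    using h' by (simp add: sum.cl_ivl_Suc)
  then show ?thesis
    using ideal_diff_mem[OF I] heads[of h] heads[of h'] h' by (metis add_diff_cancel_left' le_SucI order_refl)
qed

lemma poly_mat_in_ideal_iff_Int_star:
  assumes "0 \<in> S" and "1 \<le> a" "a \<le> b" "b \<le> n"
  shows "(\<forall>C. in_T n S C \<longrightarrow> poly_mat n g C a b \<in> I) \<longleftrightarrow> Int_star S I (pair_path g a b)"
proof
  assume H: "\<forall>C. in_T n S C \<longrightarrow> poly_mat n g C a b \<in> I"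
  show "Int_star S I (pair_path g a b)"
    unfolding Int_star_def
  proof (intro allI impI)
    fix \<sigma> :: "nat \<times> nat \<Rightarrow> 'a" assume \<sigma>: "\<forall>x y. \<sigma> (x, y) \<in> S"
    define C where "C = (\<lambda>x y. if 1 \<le> x \<and> x \<le> y \<and> y \<le> n then \<sigma> (x, y) else 0)"
    have C_T: "in_T n S C"
      using \<sigma> unfolding in_T_def C_def by auto
    have "pair_path g a b \<sigma> = pair_path g a b (\<lambda>(x, y). C x y)"
      using assms(2-4) by (intro pair_path_cong) (auto simp: C_def)
    also have "\<dots> = poly_mat n g C a b"
      using poly_mat_eq_pair_path[OF C_T] assms(2,4) by simp
    finally show "pair_path g a b \<sigma> \<in> I"
      using H C_T by simp
  qed
next
  assume H: "Int_star S I (pair_path g a b)"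
  show "\<forall>C. in_T n S C \<longrightarrow> poly_mat n g C a b \<in> I"
  proof (intro allI impI)
    fix C assume C_T: "in_T n S C"
    have "C x y \<in> S" for x y
      using C_T \<open>0 \<in> S\<close> unfolding in_T_def by (cases "1 \<le> x \<and> x \<le> y \<and> y \<le> n") auto
    then have "pair_path g a b (\<lambda>(x, y). C x y) \<in> I"
      using H unfolding Int_star_def by simp
    then show "poly_mat n g C a b \<in> I"
      using poly_mat_eq_pair_path[OF C_T] assms(2,4) by simp
  qed
qed

lemma Int_T_iff_Int_star:
  assumes "0 \<in> S" and I: "is_ideal_of I S"
  shows "g \<in> Int_T m S I \<longleftrightarrow> (\<forall>a b. 1 \<le> a \<and> a \<le> b \<and> b \<le> m \<longrightarrow> Int_star S I (pair_path g a b))"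
proof -
  have "g \<in> Int_T m S I \<longleftrightarrow>
      (\<forall>a b. 1 \<le> a \<and> a \<le> b \<and> b \<le> m \<longrightarrow> (\<forall>C. in_T m S C \<longrightarrow> poly_mat m g C a b \<in> I))"
    using poly_mat_eq_0[of m S] ideal_zero_mem[OF I] by (auto simp: Int_T_def in_T_def)
  also have "\<dots> \<longleftrightarrow> (\<forall>a b. 1 \<le> a \<and> a \<le> b \<and> b \<le> m \<longrightarrow> Int_star S I (pair_path g a b))"
    using poly_mat_in_ideal_iff_Int_star[OF \<open>0 \<in> S\<close>] by blast
  finally show ?thesis .
qed

lemma degree_le_deg_bound: "is_Tpoly n f \<Longrightarrow> degree (f a b) \<le> deg_bound n f"
proof (cases "a \<in> {1..n} \<and> b \<in> {1..n}")
  case True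
  have "degree (f a b) \<le> (\<Sum>b'\<in>{1..n}. degree (f a b'))"
    using True by (intro member_le_sum) auto
  also have "\<dots> \<le> deg_bound n f"
    unfolding deg_bound_def using True
    by (intro member_le_sum[where f = "\<lambda>a. \<Sum>b\<in>{1..n}. degree (f a b)"]) auto
  finally show ?thesis .
next
  case False
  moreover assume "is_Tpoly n f"
  ultimately show ?thesis
    unfolding is_Tpoly_def by auto
qed

lemma right_eval_eq_sum: "is_Tpoly n f \<Longrightarrow> right_eval n f C i j = (\<Sum>h\<in>{1..n}. poly_mat n (f i h) C h j)"
  unfolding right_eval_def by (subst sum.swap) (simp add: poly_mat_eq_sum_atMost[OF degree_le_deg_bound])

lemma left_eval_eq_sum: "is_Tpoly n f \<Longrightarrow> left_eval n f C i j = (\<Sum>h\<in>{1..n}. poly_mat n (f h j) C i h)"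
  unfolding left_eval_def
  by (subst sum.swap) (simp add: poly_mat_eq_sum_atMost[OF degree_le_deg_bound] mult.commute)

definition keep_rows_from :: "nat \<Rightarrow> (nat \<Rightarrow> nat \<Rightarrow> 'a::zero) \<Rightarrow> nat \<Rightarrow> nat \<Rightarrow> 'a" where
  "keep_rows_from h C = (\<lambda>a b. if h \<le> a then C a b else 0)"

definition keep_cols_upto :: "nat \<Rightarrow> (nat \<Rightarrow> nat \<Rightarrow> 'a::zero) \<Rightarrow> nat \<Rightarrow> nat \<Rightarrow> 'a" where
  "keep_cols_upto h C = (\<lambda>a b. if b \<le> h then C a b else 0)"

lemma in_T_keep_rows_from: "0 \<in> A \<Longrightarrow> in_T n A C \<Longrightarrow> in_T n A (keep_rows_from h C)"
  unfolding in_T_def keep_rows_from_def by auto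

lemma in_T_keep_cols_upto: "0 \<in> A \<Longrightarrow> in_T n A C \<Longrightarrow> in_T n A (keep_cols_upto h C)"
  unfolding in_T_def keep_cols_upto_def by auto

lemma poly_mat_keep_rows_from:
  assumes "0 \<in> A" "in_T n A C" and "1 \<le> a" "h \<le> b" "b \<le> n"
  shows "poly_mat n g (keep_rows_from h C) a b = (if h \<le> a then poly_mat n g C a b else 0)"
proof (cases "h \<le> a")
  case True
  have "poly_mat n g (keep_rows_from h C) a b = pair_path g a b (\<lambda>(x, y). keep_rows_from h C x y)"
    using poly_mat_eq_pair_path[OF in_T_keep_rows_from[OF assms(1,2)]] assms(3,5) by simp
  also have "\<dots> = pair_path g a b (\<lambda>(x, y). C x y)"
    using True by (intro pair_path_cong) (auto simp: keep_rows_from_def)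
  also have "\<dots> = poly_mat n g C a b"
    using poly_mat_eq_pair_path[OF assms(2)] assms(3,5) by simp
  finally show ?thesis
    using True by simp
next
  case False
  have "path_val (\<lambda>(x, y). keep_rows_from h C x y) a b k = 0" for k
    using False assms(4) by (cases k) (auto simp: keep_rows_from_def)
  then show ?thesis
    using False poly_mat_eq_pair_path[OF in_T_keep_rows_from[OF assms(1,2)]] assms(3,5)
    by (simp add: pair_path_def)
qed

lemma poly_mat_keep_cols_upto:
  assumes "0 \<in> A" "in_T n A C" and "1 \<le> a" "a \<le> h" "b \<le> n"
  shows "poly_mat n g (keep_cols_upto h C) a b = (if b \<le> h then poly_mat n g C a b else 0)"
proof (cases "b \<le> h")
  case True
  have "poly_mat n g (keep_cols_upto h C) a b = pair_path g a b (\<lambda>(x, y). keep_cols_upto h C x y)"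
    using poly_mat_eq_pair_path[OF in_T_keep_cols_upto[OF assms(1,2)]] assms(3,5) by simp
  also have "\<dots> = pair_path g a b (\<lambda>(x, y). C x y)"
    using True by (intro pair_path_cong) (auto simp: keep_cols_upto_def)
  also have "\<dots> = poly_mat n g C a b"
    using poly_mat_eq_pair_path[OF assms(2)] assms(3,5) by simp
  finally show ?thesis
    using True by simp
next
  case False
  have "mat_pow n (keep_cols_upto h C) k a b = 0" for k
    using False assms(4) by (cases k) (auto simp: mat_one_def mat_mult_def keep_cols_upto_def)
  then show ?thesis
    using False by (simp add: poly_mat_def)
qed

lemma right_eval_keep_rows_from:
  assumes f: "is_Tpoly n f" and "0 \<in> A" "in_T n A C" and "1 \<le> h" "h \<le> j" "j \<le> n"
  shows "right_eval n f (keep_rows_from h C) i j = (\<Sum>l\<in>{h..j}. poly_mat n (f i l) C l j)"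
proof -
  have "right_eval n f (keep_rows_from h C) i j = (\<Sum>l\<in>{1..n}. if h \<le> l then poly_mat n (f i l) C l j else 0)"
    unfolding right_eval_eq_sum[OF f] using assms by (intro sum.cong refl poly_mat_keep_rows_from) auto
  also have "\<dots> = (\<Sum>l\<in>{h..j}. poly_mat n (f i l) C l j)"
    using assms poly_mat_eq_0[OF assms(3)] by (intro sum.mono_neutral_cong_right) auto
  finally show ?thesis .
qed

lemma left_eval_keep_cols_upto:
  assumes f: "is_Tpoly n f" and "0 \<in> A" "in_T n A C" and "1 \<le> i" "i \<le> h" "h \<le> n"
  shows "left_eval n f (keep_cols_upto h C) i j = (\<Sum>l\<in>{i..h}. poly_mat n (f l j) C i l)"
proof -
  have "left_eval n f (keep_cols_upto h C) i j = (\<Sum>l\<in>{1..n}. if l \<le> h then poly_mat n (f l j) C i l else 0)"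
    unfolding left_eval_eq_sum[OF f] using assms by (intro sum.cong refl poly_mat_keep_cols_upto) auto
  also have "\<dots> = (\<Sum>l\<in>{i..h}. poly_mat n (f l j) C i l)"
    using assms poly_mat_eq_0[OF assms(3)] by (intro sum.mono_neutral_cong_right) auto
  finally show ?thesis .
qed

lemma right_eval_row_in_ideal_iff:
  assumes "0 \<in> S" and I: "is_ideal_of I S" and f: "is_Tpoly n f" and "1 \<le> i"
  shows "(\<forall>C. in_T n S C \<longrightarrow> (\<forall>j\<in>{1..n}. right_eval n f C i j \<in> I)) \<longleftrightarrow>
    (\<forall>C. in_T n S C \<longrightarrow> (\<forall>h j. i \<le> h \<and> h \<le> j \<and> j \<le> n \<longrightarrow> poly_mat n (f i h) C h j \<in> I))"
proof (intro iffI allI impI)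
  fix C h j
  assume H: "\<forall>C. in_T n S C \<longrightarrow> (\<forall>j\<in>{1..n}. right_eval n f C i j \<in> I)"
    and C: "in_T n S C" and hj: "i \<le> h \<and> h \<le> j \<and> j \<le> n"
  show "poly_mat n (f i h) C h j \<in> I"
  proof (rule ideal_mem_of_tail_sums[OF I, where t = "\<lambda>l. poly_mat n (f i l) C l j"])
    fix h' assume "h \<le> h'" "h' \<le> j"
    then have "right_eval n f (keep_rows_from h' C) i j \<in> I"
      using H in_T_keep_rows_from[OF \<open>0 \<in> S\<close> C] hj \<open>1 \<le> i\<close> by simp
    then show "(\<Sum>l\<in>{h'..j}. poly_mat n (f i l) C l j) \<in> I"
      using right_eval_keep_rows_from[OF f \<open>0 \<in> S\<close> C, of h' j i] \<open>h \<le> h'\<close> \<open>h' \<le> j\<close> hj \<open>1 \<le> i\<close>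
      by simp
  qed (use hj in simp)
next
  fix C
  assume H: "\<forall>C. in_T n S C \<longrightarrow> (\<forall>h j. i \<le> h \<and> h \<le> j \<and> j \<le> n \<longrightarrow> poly_mat n (f i h) C h j \<in> I)"
    and C: "in_T n S C"
  have "poly_mat n (f i h) C h j \<in> I" if "j \<in> {1..n}" for h j
    using H C that f poly_mat_eq_0[OF C] ideal_zero_mem[OF I]
    by (cases "i \<le> h \<and> h \<le> j") (auto simp: is_Tpoly_def)
  then show "\<forall>j\<in>{1..n}. right_eval n f C i j \<in> I"
    by (simp add: right_eval_eq_sum[OF f] ideal_sum_mem[OF I])
qed

lemma left_eval_col_in_ideal_iff:
  assumes "0 \<in> S" and I: "is_ideal_of I S" and f: "is_Tpoly n f" and "j \<le> n"
  shows "(\<forall>C. in_T n S C \<longrightarrow> (\<forall>i\<in>{1..n}. left_eval n f C i j \<in> I)) \<longleftrightarrow>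
    (\<forall>C. in_T n S C \<longrightarrow> (\<forall>i h. 1 \<le> i \<and> i \<le> h \<and> h \<le> j \<longrightarrow> poly_mat n (f h j) C i h \<in> I))"
proof (intro iffI allI impI)
  fix C i h
  assume H: "\<forall>C. in_T n S C \<longrightarrow> (\<forall>i\<in>{1..n}. left_eval n f C i j \<in> I)"
    and C: "in_T n S C" and ih: "1 \<le> i \<and> i \<le> h \<and> h \<le> j"
  show "poly_mat n (f h j) C i h \<in> I"
  proof (rule ideal_mem_of_head_sums[OF I, where t = "\<lambda>l. poly_mat n (f l j) C i l"])
    fix h' assume "i \<le> h'" "h' \<le> h"
    then have "left_eval n f (keep_cols_upto h' C) i j \<in> I"
      using H in_T_keep_cols_upto[OF \<open>0 \<in> S\<close> C] ih \<open>j \<le> n\<close> by simp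
    then show "(\<Sum>l\<in>{i..h'}. poly_mat n (f l j) C i l) \<in> I"
      using left_eval_keep_cols_upto[OF f \<open>0 \<in> S\<close> C, of i h' j] \<open>i \<le> h'\<close> \<open>h' \<le> h\<close> ih \<open>j \<le> n\<close>
      by simp
  qed (use ih in simp)
next
  fix C
  assume H: "\<forall>C. in_T n S C \<longrightarrow> (\<forall>i h. 1 \<le> i \<and> i \<le> h \<and> h \<le> j \<longrightarrow> poly_mat n (f h j) C i h \<in> I)"
    and C: "in_T n S C"
  have "poly_mat n (f h j) C i h \<in> I" if "i \<in> {1..n}" for i h
    using H C that f poly_mat_eq_0[OF C] ideal_zero_mem[OF I]
    by (cases "i \<le> h \<and> h \<le> j") (auto simp: is_Tpoly_def)
  then show "\<forall>i\<in>{1..n}. left_eval n f C i j \<in> I"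
    by (simp add: left_eval_eq_sum[OF f] ideal_sum_mem[OF I])
qed

lemma Int_star_row_iff_Int_T:
  assumes "0 \<in> S" and I: "is_ideal_of I S" and "1 \<le> h" "h \<le> n"
  shows "(\<forall>j. h \<le> j \<and> j \<le> n \<longrightarrow> Int_star S I (pair_path g h j)) \<longleftrightarrow> g \<in> Int_T (n - h + 1) S I"
  unfolding Int_T_iff_Int_star[OF assms(1,2)]
proof (intro iffI allI impI)
  fix a b assume H: "\<forall>j. h \<le> j \<and> j \<le> n \<longrightarrow> Int_star S I (pair_path g h j)"
    and ab: "1 \<le> a \<and> a \<le> b \<and> b \<le> n - h + 1"
  moreover have "h \<le> h + (b - a) \<and> h + (b - a) \<le> n"
    using ab \<open>h \<le> n\<close> by auto
  ultimately have "Int_star S I (pair_path g h (h + (b - a)))"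
    by blast
  then show "Int_star S I (pair_path g a b)"
    using Int_star_pair_path_translate ab by (metis add_diff_cancel_left' le_add1)
next
  fix j assume H: "\<forall>a b. 1 \<le> a \<and> a \<le> b \<and> b \<le> n - h + 1 \<longrightarrow> Int_star S I (pair_path g a b)"
    and hj: "h \<le> j \<and> j \<le> n"
  then have "Int_star S I (pair_path g 1 (1 + (j - h)))"
    by auto
  then show "Int_star S I (pair_path g h j)"
    using Int_star_pair_path_translate hj by (metis add_diff_cancel_left' le_add1)
qed

lemma Int_star_col_iff_Int_T:
  assumes "0 \<in> S" and I: "is_ideal_of I S" and "1 \<le> h"
  shows "(\<forall>i. 1 \<le> i \<and> i \<le> h \<longrightarrow> Int_star S I (pair_path g i h)) \<longleftrightarrow> g \<in> Int_T h S I"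
  unfolding Int_T_iff_Int_star[OF assms(1,2)]
proof (intro iffI allI impI)
  fix a b assume H: "\<forall>i. 1 \<le> i \<and> i \<le> h \<longrightarrow> Int_star S I (pair_path g i h)"
    and ab: "1 \<le> a \<and> a \<le> b \<and> b \<le> h"
  moreover have "1 \<le> h - (b - a) \<and> h - (b - a) \<le> h"
    using ab by auto
  ultimately have "Int_star S I (pair_path g (h - (b - a)) h)"
    by blast
  then show "Int_star S I (pair_path g a b)"
    using Int_star_pair_path_translate ab by (metis diff_diff_cancel diff_le_self le_trans)
qed (use \<open>1 \<le> h\<close> in auto)

theorem lemma4p1:
  fixes S I :: "'a::comm_ring_1 set" and n :: nat and f :: "nat \<Rightarrow> nat \<Rightarrow> 'a poly"
  assumes "is_subring S" and "is_ideal_of I S" and "n \<ge> 1" and "is_Tpoly n f"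
  shows "(\<forall>i\<in>{1..n}.
      ((\<forall>C. in_T n S C \<longrightarrow> (\<forall>j\<in>{1..n}. right_eval n f C i j \<in> I))
        \<longleftrightarrow> (\<forall>C. in_T n S C \<longrightarrow> (\<forall>h j. i \<le> h \<and> h \<le> j \<and> j \<le> n \<longrightarrow> poly_mat n (f i h) C h j \<in> I))) \<and>
      ((\<forall>C. in_T n S C \<longrightarrow> (\<forall>h j. i \<le> h \<and> h \<le> j \<and> j \<le> n \<longrightarrow> poly_mat n (f i h) C h j \<in> I))
        \<longleftrightarrow> (\<forall>h j. i \<le> h \<and> h \<le> j \<and> j \<le> n \<longrightarrow> Int_star S I (pair_path (f i h) h j))) \<and>
      ((\<forall>h j. i \<le> h \<and> h \<le> j \<and> j \<le> n \<longrightarrow> Int_star S I (pair_path (f i h) h j))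
        \<longleftrightarrow> (\<forall>h\<in>{i..n}. f i h \<in> Int_T (n - h + 1) S I)))
   \<and> (\<forall>j\<in>{1..n}.
      ((\<forall>C. in_T n S C \<longrightarrow> (\<forall>i\<in>{1..n}. left_eval n f C i j \<in> I))
        \<longleftrightarrow> (\<forall>C. in_T n S C \<longrightarrow> (\<forall>i h. 1 \<le> i \<and> i \<le> h \<and> h \<le> j \<longrightarrow> poly_mat n (f h j) C i h \<in> I))) \<and>
      ((\<forall>C. in_T n S C \<longrightarrow> (\<forall>i h. 1 \<le> i \<and> i \<le> h \<and> h \<le> j \<longrightarrow> poly_mat n (f h j) C i h \<in> I))
        \<longleftrightarrow> (\<forall>i h. 1 \<le> i \<and> i \<le> h \<and> h \<le> j \<longrightarrow> Int_star S I (pair_path (f h j) i h))) \<and>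
      ((\<forall>i h. 1 \<le> i \<and> i \<le> h \<and> h \<le> j \<longrightarrow> Int_star S I (pair_path (f h j) i h))
        \<longleftrightarrow> (\<forall>h\<in>{1..j}. f h j \<in> Int_T h S I)))"
proof -
  have "0 \<in> S"
    using assms(1) by (simp add: is_subring_def)
  note entry_iff = poly_mat_in_ideal_iff_Int_star[OF \<open>0 \<in> S\<close>]
  have row_entries_iff: "(\<forall>C. in_T n S C \<longrightarrow> (\<forall>h j. i \<le> h \<and> h \<le> j \<and> j \<le> n \<longrightarrow> poly_mat n (f i h) C h j \<in> I))
      \<longleftrightarrow> (\<forall>h j. i \<le> h \<and> h \<le> j \<and> j \<le> n \<longrightarrow> Int_star S I (pair_path (f i h) h j))" if "1 \<le> i" for i
    using entry_iff[of h j n "f i h" I for h j] that by (meson order_trans)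
  have row_paths_iff: "(\<forall>h j. i \<le> h \<and> h \<le> j \<and> j \<le> n \<longrightarrow> Int_star S I (pair_path (f i h) h j))
      \<longleftrightarrow> (\<forall>h\<in>{i..n}. f i h \<in> Int_T (n - h + 1) S I)" if "1 \<le> i" for i
    using Int_star_row_iff_Int_T[OF \<open>0 \<in> S\<close> assms(2), of _ n] that by (smt (verit) atLeastAtMost_iff order_trans)
  have col_entries_iff: "(\<forall>C. in_T n S C \<longrightarrow> (\<forall>i h. 1 \<le> i \<and> i \<le> h \<and> h \<le> j \<longrightarrow> poly_mat n (f h j) C i h \<in> I))
      \<longleftrightarrow> (\<forall>i h. 1 \<le> i \<and> i \<le> h \<and> h \<le> j \<longrightarrow> Int_star S I (pair_path (f h j) i h))" if "j \<le> n" for j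
    using entry_iff[of i h n "f h j" I for i h] that by (meson order_trans)
  have col_paths_iff: "(\<forall>i h. 1 \<le> i \<and> i \<le> h \<and> h \<le> j \<longrightarrow> Int_star S I (pair_path (f h j) i h))
      \<longleftrightarrow> (\<forall>h\<in>{1..j}. f h j \<in> Int_T h S I)" for j
    using Int_star_col_iff_Int_T[OF \<open>0 \<in> S\<close> assms(2)] by (smt (verit) atLeastAtMost_iff order_trans)
  show ?thesis
    using right_eval_row_in_ideal_iff[OF \<open>0 \<in> S\<close> assms(2,4)] row_entries_iff row_paths_iff
      left_eval_col_in_ideal_iff[OF \<open>0 \<in> S\<close> assms(2,4)] col_entries_iff col_paths_iff
    by auto
qed

end
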